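(* Let $k\ge0$ be an integer and $a,b,d\in\mathbb{C}$ generic. Put $p=\tfrac14-\tfrac k2+\tfrac b2$, $q=\tfrac14-\tfrac k2-\tfrac b2$, and define the polynomial of degree $3k$ in $n$ $$Q_k^{(3)}(n;a;b;d)=\frac{4^k}{(\tfrac12+b)_k(\tfrac12-b)_k}\sum_{j=0}^k\frac{(-n)_j(\tfrac n2+\tfrac a2)_j(-k)_j(-\tfrac n2-\tfrac a2-\tfrac12+d)_j}{j!\,(d)_j}\,\bigl(p-\tfrac n2+j\bigr)_{k-j}\bigl(q-\tfrac n2+j\bigr)_{k-j}.$$ Then, near $x=0$, $${}_4F_3\!\left[\begin{matrix}\tfrac a3,\ \tfrac13+\tfrac a3,\ \tfrac23+\tfrac a3,\ k+d\\ \tfrac34+\tfrac k2+\tfrac a2+\tfrac b2,\ \tfrac34+\tfrac k2+\tfrac a2-\tfrac b2,\ d\end{matrix}\,\Big|\,-\frac{27x}{(1-4x)^3}\right]=(1-4x)^a\sum_{n=0}^\infty\frac{(a)_n(\tfrac12-k-b)_n(\tfrac12-k+b)_n}{n!\,(\tfrac34+\tfrac k2+\tfrac a2+\tfrac b2)_n(\tfrac34+\tfrac k2+\tfrac a2-\tfrac b2)_n}\,Q_k^{(3)}(n;a;b;d)\,x^n.$$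
   Context: $(c)_n$ denotes the Pochhammer symbol, $(c)_0=1$; ${}_pF_q$ is the generalized hypergeometric series. Parameters are assumed generic so that no lower parameter is a nonpositive integer and $(\tfrac12\pm b)_k\neq0$. *)

theory Defs
  imports "HOL-Analysis.Analysis"
begin

definition hyp_term :: "complex list \<Rightarrow> complex list \<Rightarrow> complex \<Rightarrow> nat \<Rightarrow> complex" where
  "hyp_term as bs z n =
     (\<Prod>a\<leftarrow>as. pochhammer a n) / (\<Prod>b\<leftarrow>bs. pochhammer b n) * z ^ n / fact n"

definition hypergeom :: "complex list \<Rightarrow> complex list \<Rightarrow> complex \<Rightarrow> complex" where
  "hypergeom as bs z = (\<Sum>n. hyp_term as bs z n)"

definition Q3 :: "nat \<Rightarrow> nat \<Rightarrow> complex \<Rightarrow> complex \<Rightarrow> complex \<Rightarrow> complex" where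
  "Q3 k n a b d =
    (let p = 1/4 - of_nat k / 2 + b / 2; q = 1/4 - of_nat k / 2 - b / 2; m = of_nat n :: complex in
     4 ^ k / (pochhammer (1/2 + b) k * pochhammer (1/2 - b) k) *
     (\<Sum>j=0..k. pochhammer (- m) j * pochhammer (m/2 + a/2) j * pochhammer (- of_nat k) j
                 * pochhammer (- m/2 - a/2 - 1/2 + d) j / (fact j * pochhammer d j)
               * pochhammer (p - m/2 + of_nat j) (k - j) * pochhammer (q - m/2 + of_nat j) (k - j)))"

end

theory Submission
  imports Defs
begin

text \<open>Put w = 1 - 4x. The left-hand side is the sum over m of T_m (-27 x)^m w^(-a-3m), where T_m is
  the m-th coefficient of the 4F3. Expanding every w^(-a-3m) by the binomial series gives a double
  series which, for small x, is dominated by a product of two geometric series, so it may be summed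
  along the diagonals m + i = N. By Gauss' triplication of (a)_3m and the duplication of (a+N)_2m,
  the coefficient of x^N is (a)_N 4^N / N! times a terminating balanced 4F3. Expanding its factor
  (k+d)_m / (d)_m and summing the inner balanced 3F2 by Pfaff-Saalschuetz turns this 4F3 into the
  k+1 term sum that defines Q_k^(3).\<close>

section \<open>Pochhammer identities\<close>

lemma continuous_on_eq_off_finite:
  fixes f g :: "'a::{t1_space,perfect_space} \<Rightarrow> 'b::t2_space"
  assumes "continuous_on UNIV f" "continuous_on UNIV g" "finite S" "\<And>x. x \<notin> S \<Longrightarrow> f x = g x"
  shows "f x = g x"
proof -
  have f: "(f \<longlongrightarrow> f x) (at x)" and g: "(g \<longlongrightarrow> g x) (at x)"
    using assms(1,2) by (simp_all add: continuous_on_def)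
  have "eventually (\<lambda>y. y \<notin> S) (at x)"
    using islimpt_finite[OF assms(3), of x] by (simp add: islimpt_iff_eventually)
  then have "eventually (\<lambda>y. g y = f y) (at x)"
    by eventually_elim (use assms(4) in auto)
  with g have "(f \<longlongrightarrow> g x) (at x)" by (rule tendsto_cong[THEN iffD1, rotated])
  with f show ?thesis by (rule tendsto_unique[rotated]) simp
qed

lemma pochhammer_nonzero:
  fixes c :: "'a::field_char_0"
  assumes "\<And>m. c \<noteq> - of_nat m"
  shows "pochhammer c n \<noteq> 0"
  using assms by (auto simp: pochhammer_eq_0_iff)

lemma pochhammer_minus_of_nat:
  fixes n :: nat
  assumes "m \<le> n"
  shows "pochhammer (- of_nat n :: 'a::field_char_0) m = (-1)^m * fact n / fact (n - m)"
proof -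
  have "fact n = (fact (n - m) :: 'a) * pochhammer (1 + of_nat (n - m)) m"
    using pochhammer_product[of "n - m" n "1::'a"] assms by (simp add: pochhammer_fact)
  moreover have "pochhammer (- of_nat n :: 'a) m = (-1)^m * pochhammer (1 + of_nat (n - m)) m"
    using pochhammer_minus[of "of_nat n :: 'a" m] assms by (simp add: of_nat_diff add.commute)
  ultimately show ?thesis by simp
qed

lemma pochhammer_triplication:
  fixes a :: "'a::field_char_0"
  shows "27^m * pochhammer (a/3) m * pochhammer (1/3 + a/3) m * pochhammer (2/3 + a/3) m
           = pochhammer a (3*m)"
proof (induction m)
  case 0
  show ?case by simp
next
  case (Suc m)
  have "27^Suc m * pochhammer (a/3) (Suc m) * pochhammer (1/3 + a/3) (Suc m) * pochhammer (2/3 + a/3) (Suc m)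
      = (27^m * pochhammer (a/3) m * pochhammer (1/3 + a/3) m * pochhammer (2/3 + a/3) m)
        * (27 * (a/3 + of_nat m) * (1/3 + a/3 + of_nat m) * (2/3 + a/3 + of_nat m))"
    by (simp add: pochhammer_Suc mult_ac)
  also have "\<dots> = pochhammer a (3*m) * (27 * (a/3 + of_nat m) * (1/3 + a/3 + of_nat m) * (2/3 + a/3 + of_nat m))"
    unfolding Suc.IH ..
  also have "27 * (a/3 + of_nat m) * (1/3 + a/3 + of_nat m) * (2/3 + a/3 + of_nat m)
      = (a + of_nat (3*m)) * (a + of_nat (3*m) + 1) * (a + of_nat (3*m) + 2)"
    by (simp add: field_simps)
  also have "pochhammer a (3*m) * \<dots> = pochhammer a (3 * Suc m)"
    using pochhammer_product'[of a "3*m" 3] by (simp add: numeral_3_eq_3 pochhammer_Suc algebra_simps)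
  finally show ?case .
qed

lemma chu_vandermonde:
  fixes A C :: "'a::field_char_0"
  assumes "\<And>i. i < n \<Longrightarrow> C \<noteq> - of_nat i"
  shows "(\<Sum>l\<le>n. pochhammer (- of_nat n) l * pochhammer A l / (fact l * pochhammer C l))
           = pochhammer (C - A) n / pochhammer C n"
  using Vandermonde_pochhammer[of n C A] assms by (simp add: atLeast0AtMost mult.commute)

lemma chu_vandermonde_times_pochhammer:
  fixes A C :: "'a::field_char_0"
  assumes C: "\<And>j. j < n \<Longrightarrow> C \<noteq> - of_nat j" and i: "i \<le> n"
  shows "(\<Sum>l\<le>n. pochhammer (- of_nat n) l * pochhammer A l / (fact l * pochhammer C l)
                * pochhammer (- of_nat l) i)
       = (-1)^i * pochhammer (- of_nat n) i * pochhammer A i * pochhammer (C - A) (n - i)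
           / pochhammer C n"
proof -
  define P where "P l = pochhammer (- of_nat n) l * pochhammer A l / (fact l * pochhammer C l)
                         * pochhammer (- of_nat l) i" for l
  define c where "c = (-1)^i * pochhammer (- of_nat n) i * pochhammer A i / pochhammer C i"
  have "(\<Sum>l\<le>n. P l) = (\<Sum>l\<in>{i..n}. P l)"
    by (rule sum.mono_neutral_right) (auto simp: P_def pochhammer_of_nat_eq_0_iff)
  also have "\<dots> = (\<Sum>r\<in>{0..n-i}. P (r + i))"
    using sum.shift_bounds_cl_nat_ivl[of P 0 i "n - i"] i by simp
  also have "\<dots> = (\<Sum>r\<le>n-i. c * (pochhammer (- of_nat (n - i)) r * pochhammer (A + of_nat i) r
                / (fact r * pochhammer (C + of_nat i) r)))"
  proof (rule sum.cong)
    fix r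
    have split: "pochhammer (- of_nat n :: 'a) (i + r)
        = pochhammer (- of_nat n) i * pochhammer (- of_nat (n - i)) r"
      using pochhammer_product'[of "- of_nat n :: 'a" i r] i by (simp add: of_nat_diff)
    have minus: "pochhammer (- of_nat (i + r) :: 'a) i = (-1)^i * fact (i + r) / fact r"
      using pochhammer_minus_of_nat[of i "i + r"] by simp
    show "P (r + i) = c * (pochhammer (- of_nat (n - i)) r * pochhammer (A + of_nat i) r
                / (fact r * pochhammer (C + of_nat i) r))"
      unfolding P_def add.commute[of r i] split minus pochhammer_product'[of A i r]
        pochhammer_product'[of C i r]
      by (simp add: c_def field_simps)
  qed (simp add: atLeast0AtMost)
  also have "\<dots> = c * (pochhammer (C - A) (n - i) / pochhammer (C + of_nat i) (n - i))"
  proof -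
    have "C + of_nat i \<noteq> - of_nat j" if "j < n - i" for j
    proof
      assume h: "C + of_nat i = - of_nat j"
      have "C = (C + of_nat i) - of_nat i" by simp
      also have "\<dots> = - of_nat (i + j)" using h by simp
      finally have "C = - of_nat (i + j)" .
      moreover have "i + j < n" using that by linarith
      ultimately show False using C by blast
    qed
    from chu_vandermonde[of "n - i" "C + of_nat i" "A + of_nat i", OF this]
    have "(\<Sum>r\<le>n-i. pochhammer (- of_nat (n - i)) r * pochhammer (A + of_nat i) r
              / (fact r * pochhammer (C + of_nat i) r))
        = pochhammer (C - A) (n - i) / pochhammer (C + of_nat i) (n - i)"
      by simp
    then show ?thesis by (simp only: sum_distrib_left[symmetric])
  qed
  also have "pochhammer C i * pochhammer (C + of_nat i) (n - i) = pochhammer C n"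
    using pochhammer_product[of i n C] i by simp
  then have "c * (pochhammer (C - A) (n - i) / pochhammer (C + of_nat i) (n - i))
      = (-1)^i * pochhammer (- of_nat n) i * pochhammer A i * pochhammer (C - A) (n - i) / pochhammer C n"
    by (auto simp: c_def field_simps)
  finally show ?thesis unfolding P_def .
qed

lemma pfaff_saalschuetz:
  fixes A B C D :: "'a::field_char_0"
  assumes C: "\<And>i. i < n \<Longrightarrow> C \<noteq> - of_nat i" and D: "\<And>i. i < n \<Longrightarrow> D \<noteq> - of_nat i"
    and balanced: "C + D = 1 + A + B - of_nat n"
  shows "(\<Sum>l\<le>n. pochhammer (- of_nat n) l * pochhammer A l * pochhammer B l
             / (fact l * pochhammer C l * pochhammer D l))
       = pochhammer (C - A) n * pochhammer (D - A) n / (pochhammer C n * pochhammer D n)"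
proof -
  define P where "P l = pochhammer (- of_nat n) l * pochhammer A l / (fact l * pochhammer C l)" for l
  define Q where "Q l i = pochhammer (- of_nat l) i * pochhammer (D - B) i / (fact i * pochhammer D i)" for l i
  have B_over_D: "pochhammer B l / pochhammer D l = (\<Sum>i\<le>n. Q l i)" if "l \<le> n" for l
  proof -
    have "(\<Sum>i\<le>n. Q l i) = (\<Sum>i\<le>l. Q l i)"
      by (rule sum.mono_neutral_right) (use that in \<open>auto simp: Q_def pochhammer_of_nat_eq_0_iff\<close>)
    also have "\<dots> = pochhammer (D - (D - B)) l / pochhammer D l"
      unfolding Q_def by (rule chu_vandermonde) (use D that in auto)
    finally show ?thesis by simp
  qed
  have DB: "pochhammer (D - B) i * (-1)^i * pochhammer (C - A) (n - i) = pochhammer (C - A) n"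
    if i: "i \<le> n" for i
  proof -
    have "D - B = - (C - A + of_nat n - 1)" using balanced by (simp add: algebra_simps)
    then have "pochhammer (D - B) i = (-1)^i * pochhammer (C - A + of_nat n - 1 - of_nat i + 1) i"
      by (simp only: pochhammer_minus)
    also have "C - A + of_nat n - 1 - of_nat i + 1 = C - A + of_nat (n - i)"
      using i by (simp add: of_nat_diff)
    finally have "pochhammer (D - B) i = (-1)^i * pochhammer (C - A + of_nat (n - i)) i" .
    then show ?thesis
      using pochhammer_product'[of "C - A" "n - i" i] i by (simp add: mult_ac)
  qed
  have "(\<Sum>l\<le>n. pochhammer (- of_nat n) l * pochhammer A l * pochhammer B l
             / (fact l * pochhammer C l * pochhammer D l))
      = (\<Sum>l\<le>n. \<Sum>i\<le>n. P l * Q l i)"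
  proof (rule sum.cong[OF refl])
    fix l assume "l \<in> {..n}"
    then have "(\<Sum>i\<le>n. P l * Q l i) = P l * (pochhammer B l / pochhammer D l)"
      using B_over_D[of l] by (simp add: sum_distrib_left)
    then show "pochhammer (- of_nat n) l * pochhammer A l * pochhammer B l
             / (fact l * pochhammer C l * pochhammer D l) = (\<Sum>i\<le>n. P l * Q l i)"
      by (simp add: P_def divide_inverse mult_ac)
  qed
  also have "\<dots> = (\<Sum>i\<le>n. \<Sum>l\<le>n. P l * Q l i)"
    by (rule sum.swap)
  also have "\<dots> = (\<Sum>i\<le>n. pochhammer (D - B) i / (fact i * pochhammer D i)
                   * (\<Sum>l\<le>n. P l * pochhammer (- of_nat l) i))"
    by (rule sum.cong[OF refl]) (simp add: Q_def sum_distrib_left sum_divide_distrib mult_ac)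
  also have "\<dots> = (\<Sum>i\<le>n. pochhammer (C - A) n / pochhammer C n
                   * (pochhammer (- of_nat n) i * pochhammer A i / (fact i * pochhammer D i)))"
  proof (rule sum.cong[OF refl])
    fix i assume "i \<in> {..n}"
    then have "i \<le> n" by simp
    then show "pochhammer (D - B) i / (fact i * pochhammer D i) * (\<Sum>l\<le>n. P l * pochhammer (- of_nat l) i)
        = pochhammer (C - A) n / pochhammer C n
            * (pochhammer (- of_nat n) i * pochhammer A i / (fact i * pochhammer D i))"
      using chu_vandermonde_times_pochhammer[OF C \<open>i \<le> n\<close>, of A] DB[OF \<open>i \<le> n\<close>]
      by (auto simp: P_def field_simps)
  qed
  also have "\<dots> = pochhammer (C - A) n / pochhammer C n * (pochhammer (D - A) n / pochhammer D n)"
    by (subst sum_distrib_left[symmetric], subst chu_vandermonde) (use D in auto)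
  finally show ?thesis by simp
qed

lemma finite_pochhammer_zeros:
  fixes u c :: "'a::field_char_0"
  assumes "u \<noteq> 0"
  shows "finite {y. pochhammer (u * y + c) n = 0}"
proof (rule finite_subset)
  show "{y. pochhammer (u * y + c) n = 0} \<subseteq> (\<lambda>i. - (c + of_nat i) / u) ` {..<n}"
  proof
    fix y assume "y \<in> {y. pochhammer (u * y + c) n = 0}"
    then obtain i where "i < n" "u * y + c = - of_nat i" by (auto simp: pochhammer_eq_0_iff)
    moreover from this(2) have "u * y = - (c + of_nat i)" by algebra
    then have "y = - (c + of_nat i) / u" using assms by (metis nonzero_mult_div_cancel_left)
    ultimately show "y \<in> (\<lambda>i. - (c + of_nat i) / u) ` {..<n}" by blast
  qed
qed simp

lemma pochhammer_product_expansion_generic: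
  fixes d x :: "'a::field_char_0"
  assumes d: "\<And>i. d \<noteq> - of_nat i"
    and D_nz: "pochhammer (1 - x - of_nat k - of_nat m) m \<noteq> 0"
    and xk_nz: "pochhammer (x + of_nat k) m \<noteq> 0"
  shows "pochhammer x m * pochhammer (d + of_nat k) m / (pochhammer d m * fact m)
       = (\<Sum>j\<le>m. pochhammer (d - x) j * pochhammer (- of_nat k) j * pochhammer (x + of_nat k) (m - j)
                  / (fact j * fact (m - j) * pochhammer d j))"
proof -
  define D where "D = 1 - x - of_nat k - of_nat m"
  have D_pochhammer: "pochhammer D j = (-1)^j * pochhammer (x + of_nat k + of_nat (m - j)) j"
    if "j \<le> m" for j
  proof -
    have "D = - (x + of_nat k + of_nat m - 1)" by (simp add: D_def algebra_simps)
    then have "pochhammer D j = (-1)^j * pochhammer (x + of_nat k + of_nat m - 1 - of_nat j + 1) j"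
      by (simp only: pochhammer_minus)
    also have "x + of_nat k + of_nat m - 1 - of_nat j + 1 = x + of_nat k + of_nat (m - j)"
      using that by (simp add: of_nat_diff)
    finally show ?thesis .
  qed
  have saal: "(\<Sum>j\<le>m. pochhammer (- of_nat m) j * pochhammer (d - x) j * pochhammer (- of_nat k) j
               / (fact j * pochhammer d j * pochhammer D j))
      = pochhammer x m * pochhammer (d + of_nat k) m / (pochhammer d m * pochhammer (x + of_nat k) m)"
  proof -
    have "pochhammer (- (d + of_nat k + of_nat m - 1)) m = (-1)^m * pochhammer (d + of_nat k) m"
      using pochhammer_minus[of "d + of_nat k + of_nat m - 1" m] by simp
    moreover have "D - (d - x) = - (d + of_nat k + of_nat m - 1)" by (simp add: D_def algebra_simps)
    moreover have "D \<noteq> - of_nat i" if "i < m" for i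
      using D_nz that by (auto simp: D_def pochhammer_eq_0_iff)
    ultimately show ?thesis
      using pfaff_saalschuetz[of m d D "d - x" "- of_nat k"] d D_pochhammer[of m]
      by (simp add: D_def algebra_simps)
  qed
  have "(\<Sum>j\<le>m. pochhammer (d - x) j * pochhammer (- of_nat k) j * pochhammer (x + of_nat k) (m - j)
                  / (fact j * fact (m - j) * pochhammer d j))
      = (\<Sum>j\<le>m. pochhammer (x + of_nat k) m / fact m * (pochhammer (- of_nat m) j
      * pochhammer (d - x) j * pochhammer (- of_nat k) j / (fact j * pochhammer d j * pochhammer D j)))"
  proof (rule sum.cong[OF refl])
    fix j assume "j \<in> {..m}"
    then have j: "j \<le> m" by simp
    have split: "pochhammer (x + of_nat k) m
        = pochhammer (x + of_nat k) (m - j) * pochhammer (x + of_nat k + of_nat (m - j)) j"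
      using pochhammer_product'[of "x + of_nat k" "m - j" j] j by simp
    with xk_nz have "pochhammer (x + of_nat k + of_nat (m - j)) j \<noteq> 0" by auto
    moreover have "((-1::'a)^j) * (-1)^j = 1" by (simp flip: power_mult_distrib)
    ultimately show "pochhammer (d - x) j * pochhammer (- of_nat k) j * pochhammer (x + of_nat k) (m - j)
                / (fact j * fact (m - j) * pochhammer d j)
        = pochhammer (x + of_nat k) m / fact m * (pochhammer (- of_nat m) j * pochhammer (d - x) j
          * pochhammer (- of_nat k) j / (fact j * pochhammer d j * pochhammer D j))"
      unfolding D_pochhammer[OF j] pochhammer_minus_of_nat[OF j] split by (simp add: field_simps)
  qed
  also have "\<dots> = pochhammer (x + of_nat k) m / fact m * (\<Sum>j\<le>m. pochhammer (- of_nat m) j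
      * pochhammer (d - x) j * pochhammer (- of_nat k) j / (fact j * pochhammer d j * pochhammer D j))"
    by (rule sum_distrib_left[symmetric])
  also have "\<dots> = pochhammer x m * pochhammer (d + of_nat k) m / (pochhammer d m * fact m)"
    unfolding saal using xk_nz by (simp add: field_simps)
  finally show ?thesis by (rule sym)
qed

lemma pochhammer_product_expansion:
  fixes d x :: complex
  assumes d: "\<And>i. d \<noteq> - of_nat i"
  shows "pochhammer x m * pochhammer (d + of_nat k) m / (pochhammer d m * fact m)
       = (\<Sum>j\<le>m. pochhammer (d - x) j * pochhammer (- of_nat k) j * pochhammer (x + of_nat k) (m - j)
                  / (fact j * fact (m - j) * pochhammer d j))"
proof -
  \<comment> \<open>Both sides are polynomials in x, so the generic case extends to all x.\<close>
  define L where "L x = pochhammer x m * pochhammer (d + of_nat k) m / (pochhammer d m * fact m)"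
    for x :: complex
  define R where "R x = (\<Sum>j\<le>m. pochhammer (d - x) j * pochhammer (- of_nat k) j
      * pochhammer (x + of_nat k) (m - j) / (fact j * fact (m - j) * pochhammer d j))" for x
  define S where "S = {y. pochhammer ((-1) * y + (1 - of_nat k - of_nat m)) m = 0}
                      \<union> {y::complex. pochhammer (1 * y + of_nat k) m = 0}"
  have generic: "L x = R x" if "x \<notin> S" for x
  proof -
    from that have "pochhammer (1 - x - of_nat k - of_nat m) m \<noteq> 0" "pochhammer (x + of_nat k) m \<noteq> 0"
      by (simp_all add: S_def algebra_simps)
    then show ?thesis
      unfolding L_def R_def by (rule pochhammer_product_expansion_generic[OF d])
  qed
  have "finite S"
    unfolding S_def by (intro finite_UnI finite_pochhammer_zeros) auto
  moreover have "continuous_on UNIV L" "continuous_on UNIV R"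
    using pochhammer_nonzero[OF d] by (auto simp: L_def R_def intro!: continuous_intros)
  ultimately have "L x = R x" using continuous_on_eq_off_finite generic by metis
  then show ?thesis by (simp add: L_def R_def)
qed

lemma terminating_4F3_transformation:
  fixes \<alpha> \<beta> E F d :: complex
  assumes E: "\<And>i. E \<noteq> - of_nat i" and F: "\<And>i. F \<noteq> - of_nat i" and d: "\<And>i. d \<noteq> - of_nat i"
    and balanced: "E + F = 1 + \<alpha> + \<beta> + of_nat k - of_nat N"
  shows "(\<Sum>m\<le>N. pochhammer (- of_nat N) m * pochhammer \<alpha> m * pochhammer \<beta> m * pochhammer (d + of_nat k) m
            / (fact m * pochhammer E m * pochhammer F m * pochhammer d m))
   = (\<Sum>j\<le>N. pochhammer (d - \<beta>) j * pochhammer (- of_nat k) j * pochhammer (- of_nat N) j * pochhammer \<alpha> j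
            / (fact j * pochhammer d j) * pochhammer (E - \<alpha>) (N - j) * pochhammer (F - \<alpha>) (N - j))
     / (pochhammer E N * pochhammer F N)"
proof -
  note nz = pochhammer_nonzero[OF E] pochhammer_nonzero[OF F] pochhammer_nonzero[OF d]
  define h where "h j l = pochhammer (- of_nat N) (j + l) * pochhammer \<alpha> (j + l)
      / (pochhammer E (j + l) * pochhammer F (j + l))
      * (pochhammer (d - \<beta>) j * pochhammer (- of_nat k) j * pochhammer (\<beta> + of_nat k) l
          / (fact j * fact l * pochhammer d j))" for j l
  define c where "c j = pochhammer (d - \<beta>) j * pochhammer (- of_nat k) j * pochhammer (- of_nat N) j
      * pochhammer \<alpha> j / (fact j * pochhammer d j)" for j
  have inner: "(\<Sum>l\<le>N-j. h j l)
      = c j * pochhammer (E - \<alpha>) (N - j) * pochhammer (F - \<alpha>) (N - j) / (pochhammer E N * pochhammer F N)"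
    if j: "j \<le> N" for j
  proof -
    have h: "h j l = c j / (pochhammer E j * pochhammer F j)
        * (pochhammer (- of_nat (N - j)) l * pochhammer (\<alpha> + of_nat j) l * pochhammer (\<beta> + of_nat k) l
            / (fact l * pochhammer (E + of_nat j) l * pochhammer (F + of_nat j) l))" for l
    proof -
      have "pochhammer (- of_nat N :: complex) (j + l) = pochhammer (- of_nat N) j * pochhammer (- of_nat (N - j)) l"
        using pochhammer_product'[of "- of_nat N :: complex" j l] j by (simp add: of_nat_diff)
      then show ?thesis
        unfolding h_def c_def pochhammer_product'[of \<alpha>] pochhammer_product'[of E] pochhammer_product'[of F]
        using nz by (simp add: field_simps)
    qed
    have "(\<Sum>l\<le>N-j. pochhammer (- of_nat (N - j)) l * pochhammer (\<alpha> + of_nat j) l * pochhammer (\<beta> + of_nat k) l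
            / (fact l * pochhammer (E + of_nat j) l * pochhammer (F + of_nat j) l))
        = pochhammer (E + of_nat j - (\<alpha> + of_nat j)) (N - j) * pochhammer (F + of_nat j - (\<alpha> + of_nat j)) (N - j)
          / (pochhammer (E + of_nat j) (N - j) * pochhammer (F + of_nat j) (N - j))"
    proof (rule pfaff_saalschuetz)
      fix i
      show "E + of_nat j \<noteq> - of_nat i" "F + of_nat j \<noteq> - of_nat i"
        using E[of "j + i"] F[of "j + i"] by (auto simp: algebra_simps)
    next
      show "E + of_nat j + (F + of_nat j) = 1 + (\<alpha> + of_nat j) + (\<beta> + of_nat k) - of_nat (N - j)"
        using balanced j by (simp add: of_nat_diff algebra_simps)
    qed
    moreover have "pochhammer E N = pochhammer E j * pochhammer (E + of_nat j) (N - j)"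
      and "pochhammer F N = pochhammer F j * pochhammer (F + of_nat j) (N - j)"
      using pochhammer_product[of j N] j by simp_all
    ultimately show ?thesis
      unfolding h sum_distrib_left[symmetric] using nz by (simp add: field_simps)
  qed
  have "(\<Sum>m\<le>N. pochhammer (- of_nat N) m * pochhammer \<alpha> m * pochhammer \<beta> m * pochhammer (d + of_nat k) m
            / (fact m * pochhammer E m * pochhammer F m * pochhammer d m))
      = (\<Sum>m\<le>N. pochhammer (- of_nat N) m * pochhammer \<alpha> m / (pochhammer E m * pochhammer F m)
            * (pochhammer \<beta> m * pochhammer (d + of_nat k) m / (pochhammer d m * fact m)))"
    by (rule sum.cong[OF refl]) (simp add: divide_inverse mult_ac)
  also have "\<dots> = (\<Sum>m\<le>N. \<Sum>j\<le>m. h j (m - j))"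
    by (rule sum.cong[OF refl]) (simp add: pochhammer_product_expansion[OF d] h_def sum_distrib_left)
  also have "\<dots> = (\<Sum>(j,l)\<in>{(j,l). j + l \<le> N}. h j l)"
    by (rule sum.triangle_reindex_eq[symmetric])
  also have "{(j,l). j + l \<le> N} = Sigma {..N} (\<lambda>j. {..N-j})" by auto
  also have "(\<Sum>(j,l)\<in>Sigma {..N} (\<lambda>j. {..N-j}). h j l) = (\<Sum>j\<le>N. \<Sum>l\<le>N-j. h j l)"
    by (rule sum.Sigma[symmetric]) auto
  also have "\<dots> = (\<Sum>j\<le>N. c j * pochhammer (E - \<alpha>) (N - j) * pochhammer (F - \<alpha>) (N - j))
                    / (pochhammer E N * pochhammer F N)"
    by (simp add: inner sum_divide_distrib)
  finally show ?thesis by (simp add: c_def)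
qed

lemma pochhammer_double':
  fixes z :: "'a::field_char_0"
  shows "4^n * pochhammer z n * pochhammer (z + 1/2) n = pochhammer (2 * z) (2 * n)"
  using pochhammer_double[of z n] by (simp add: power_mult)

lemma pochhammer_duplication_identity_times:
  fixes y :: "'a::field_char_0"
  assumes jk: "j \<le> k" and jN: "j \<le> N"
  defines "M \<equiv> pochhammer y j * pochhammer (y + 1/2) k * pochhammer (y + 1/2) N
                  * pochhammer (2*y) N * pochhammer (2*y) (2*k)"
  shows "4^N * pochhammer (y + of_nat k + 1/2) (N - j) * pochhammer (y + of_nat j) (N - j)
           * pochhammer (2*y + of_nat N) (2*k) * M
       = 4^k * pochhammer (2*y + 2 * of_nat k) N * pochhammer (2*y + of_nat N) N
           * pochhammer (y + of_nat j) (k - j) * pochhammer (y + of_nat N + 1/2) (k - j) * M"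
proof -
  \<comment> \<open>Multiplying by M completes every Pochhammer symbol to one based at y, y + 1/2 or 2y.\<close>
  have "4^N * pochhammer (y + of_nat k + 1/2) (N - j) * pochhammer (y + of_nat j) (N - j)
      * pochhammer (2*y + of_nat N) (2*k) * M
      = (4^N * (pochhammer y j * pochhammer (y + of_nat j) (N - j)) * pochhammer (y + 1/2) N)
      * (pochhammer (y + 1/2) k * pochhammer (y + 1/2 + of_nat k) (N - j))
      * (pochhammer (2*y) N * pochhammer (2*y + of_nat N) (2*k)) * pochhammer (2*y) (2*k)"
    by (simp add: M_def ac_simps)
  also have "pochhammer y j * pochhammer (y + of_nat j) (N - j) = pochhammer y N"
    using pochhammer_product[OF jN, of y] by simp
  also have "pochhammer (y + 1/2) k * pochhammer (y + 1/2 + of_nat k) (N - j)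
      = pochhammer (y + 1/2) (N + (k - j))"
  proof -
    have "N + (k - j) = k + (N - j)" using jk jN by simp
    then show ?thesis by (simp only: pochhammer_product')
  qed
  also have "pochhammer (2*y) N * pochhammer (2*y + of_nat N) (2*k) = pochhammer (2*y) (2*k + N)"
    by (simp only: add.commute[of "2*k" N] pochhammer_product')
  also have "4^N * pochhammer y N * pochhammer (y + 1/2) N = pochhammer (2*y) (2*N)"
    by (rule pochhammer_double')
  finally have LM: "4^N * pochhammer (y + of_nat k + 1/2) (N - j) * pochhammer (y + of_nat j) (N - j)
      * pochhammer (2*y + of_nat N) (2*k) * M = pochhammer (2*y) (2*N) * pochhammer (y + 1/2) (N + (k - j))
      * pochhammer (2*y) (2*k + N) * pochhammer (2*y) (2*k)" .
  have "4^k * pochhammer (2*y + 2 * of_nat k) N * pochhammer (2*y + of_nat N) N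
      * pochhammer (y + of_nat j) (k - j) * pochhammer (y + of_nat N + 1/2) (k - j) * M
      = (4^k * (pochhammer y j * pochhammer (y + of_nat j) (k - j)) * pochhammer (y + 1/2) k)
      * (pochhammer (2*y) (2*k) * pochhammer (2*y + of_nat (2*k)) N)
      * (pochhammer (2*y) N * pochhammer (2*y + of_nat N) N)
      * (pochhammer (y + 1/2) N * pochhammer (y + 1/2 + of_nat N) (k - j))"
    by (simp add: M_def ac_simps)
  also have "pochhammer y j * pochhammer (y + of_nat j) (k - j) = pochhammer y k"
    using pochhammer_product[OF jk, of y] by simp
  also have "4^k * pochhammer y k * pochhammer (y + 1/2) k = pochhammer (2*y) (2*k)"
    by (rule pochhammer_double')
  also have "pochhammer (2*y) (2*k) * pochhammer (2*y + of_nat (2*k)) N = pochhammer (2*y) (2*k + N)"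
    by (rule pochhammer_product'[symmetric])
  also have "pochhammer (2*y) N * pochhammer (2*y + of_nat N) N = pochhammer (2*y) (2*N)"
    by (simp only: mult_2[of N] pochhammer_product')
  also have "pochhammer (y + 1/2) N * pochhammer (y + 1/2 + of_nat N) (k - j)
      = pochhammer (y + 1/2) (N + (k - j))"
    by (rule pochhammer_product'[symmetric])
  finally have RM: "4^k * pochhammer (2*y + 2 * of_nat k) N * pochhammer (2*y + of_nat N) N
      * pochhammer (y + of_nat j) (k - j) * pochhammer (y + of_nat N + 1/2) (k - j) * M
      = pochhammer (2*y) (2*k) * pochhammer (2*y) (2*k + N)
        * pochhammer (2*y) (2*N) * pochhammer (y + 1/2) (N + (k - j))" .
  show ?thesis
    unfolding LM RM by (simp only: ac_simps)
qed

lemma pochhammer_duplication_identity: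
  fixes y :: complex
  assumes jk: "j \<le> k" and jN: "j \<le> N"
  shows "4^N * pochhammer (y + of_nat k + 1/2) (N - j) * pochhammer (y + of_nat j) (N - j)
           * pochhammer (2*y + of_nat N) (2*k)
       = 4^k * pochhammer (2*y + 2 * of_nat k) N * pochhammer (2*y + of_nat N) N
           * pochhammer (y + of_nat j) (k - j) * pochhammer (y + of_nat N + 1/2) (k - j)"
proof -
  define L where "L y = 4^N * pochhammer (y + of_nat k + 1/2) (N - j) * pochhammer (y + of_nat j) (N - j)
           * pochhammer (2*y + of_nat N) (2*k)" for y :: complex
  define R where "R y = 4^k * pochhammer (2*y + 2 * of_nat k) N * pochhammer (2*y + of_nat N) N
           * pochhammer (y + of_nat j) (k - j) * pochhammer (y + of_nat N + 1/2) (k - j)" for y :: complex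
  define S where "S = {y. pochhammer (1 * y + 0) j = 0} \<union> {y. pochhammer (1 * y + 1/2) (k + N) = 0}
                      \<union> {y::complex. pochhammer (2 * y + 0) (N + 2 * k) = 0}"
  have generic: "L y = R y" if "y \<notin> S" for y
  proof -
    from that have "pochhammer y j \<noteq> 0" and half: "pochhammer (y + 1/2) (k + N) \<noteq> 0"
      and double: "pochhammer (2 * y) (N + 2 * k) \<noteq> 0"
      by (simp_all add: S_def)
    moreover have "pochhammer (y + 1/2) k \<noteq> 0" "pochhammer (y + 1/2) N \<noteq> 0"
      "pochhammer (2 * y) N \<noteq> 0" "pochhammer (2 * y) (2 * k) \<noteq> 0"
      using pochhammer_neq_0_mono[OF half, of k] pochhammer_neq_0_mono[OF half, of N]
        pochhammer_neq_0_mono[OF double, of N] pochhammer_neq_0_mono[OF double, of "2 * k"]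
      by simp_all
    ultimately show ?thesis
      using pochhammer_duplication_identity_times[OF jk jN, of y] by (simp add: L_def R_def)
  qed
  have "finite S"
    unfolding S_def by (intro finite_UnI finite_pochhammer_zeros) auto
  moreover have "continuous_on UNIV L" "continuous_on UNIV R"
    by (auto simp: L_def R_def intro!: continuous_intros)
  ultimately have "L y = R y" using continuous_on_eq_off_finite generic by metis
  then show ?thesis by (simp add: L_def R_def)
qed

section \<open>Growth of Pochhammer symbols and the binomial rearrangement\<close>

lemma norm_pochhammer_le_fact:
  fixes z :: "'a::real_normed_field"
  shows "norm (pochhammer z n) \<le> (norm z + 1)^n * fact n"
proof (induction n)
  case 0
  show ?case by simp
next
  case (Suc n)
  have "norm (z + of_nat n) \<le> norm z + of_nat n"
    using norm_triangle_ineq[of z "of_nat n"] by simp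
  also have "\<dots> \<le> (norm z + 1) * (of_nat n + 1)"
    using mult_nonneg_nonneg[of "norm z" "of_nat n"] by (simp add: algebra_simps)
  finally have "norm (pochhammer z (Suc n)) \<le> ((norm z + 1)^n * fact n) * ((norm z + 1) * (of_nat n + 1))"
    unfolding pochhammer_Suc norm_mult by (intro mult_mono Suc.IH) auto
  also have "\<dots> = (norm z + 1)^Suc n * fact (Suc n)"
    by (simp add: algebra_simps)
  finally show ?case .
qed

lemma norm_pochhammer_le_pow2_fact:
  fixes z :: "'a::real_normed_field"
  assumes z: "norm z \<le> real c" and c: "1 \<le> c"
  shows "norm (pochhammer z i) \<le> 2^(c + i) * fact i"
proof -
  have "norm (pochhammer z i) \<le> pochhammer (real c) i"
  proof (induction i)
    case (Suc i)
    have "norm (z + of_nat i) \<le> real c + of_nat i"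
      using norm_triangle_ineq[of z "of_nat i"] z by simp
    with Suc.IH show ?case
      unfolding pochhammer_Suc norm_mult using c by (intro mult_mono) (auto intro: pochhammer_nonneg)
  qed simp
  also have "pochhammer (real c) i = real ((c + i - 1) choose i) * fact i"
  proof -
    have "real ((c + i - 1) choose i) = pochhammer (of_nat (c + i - 1) - of_nat i + 1) i / fact i"
      by (simp add: binomial_gbinomial gbinomial_pochhammer')
    also have "of_nat (c + i - 1) - of_nat i + 1 = real c"
      using c by (simp add: of_nat_diff)
    finally show ?thesis by simp
  qed
  also have "\<dots> \<le> 2^(c + i) * fact i"
  proof (rule mult_right_mono)
    have "(c + i - 1) choose i \<le> 2^(c + i - 1)" by (rule binomial_le_pow2)
    also have "\<dots> \<le> 2^(c + i)" by (rule power_increasing) auto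
    finally show "real ((c + i - 1) choose i) \<le> 2^(c + i)"
      by (metis of_nat_le_iff of_nat_numeral of_nat_power)
  qed simp
  finally show ?thesis .
qed

lemma norm_add_of_nat_lower_bound:
  fixes l :: "'a::real_normed_field"
  assumes l: "\<And>m. l \<noteq> - of_nat m"
  shows "\<exists>\<delta>>0. \<forall>m. \<delta> * (real m + 1) \<le> norm (l + of_nat m)"
proof -
  \<comment> \<open>Beyond M the bound holds with 1/4; below M take the least of finitely many positive ratios.\<close>
  define M where "M = nat \<lceil>2 * norm l\<rceil> + 1"
  define F where "F = (\<lambda>m. norm (l + of_nat m) / (real m + 1)) ` {..M}"
  have "l + of_nat m \<noteq> 0" for m
    using l[of m] by (auto simp: add_eq_0_iff)
  then have "\<forall>t\<in>F. t > 0" by (auto simp: F_def)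
  moreover have "finite F" "F \<noteq> {}" by (auto simp: F_def)
  ultimately have "Min F > 0" by simp
  define \<delta> where "\<delta> = min (Min F) (1/4)"
  have "\<delta> * (real m + 1) \<le> norm (l + of_nat m)" for m
  proof (cases "m \<le> M")
    case True
    then have "Min F \<le> norm (l + of_nat m) / (real m + 1)"
      using \<open>finite F\<close> by (auto simp: F_def)
    then have "Min F * (real m + 1) \<le> norm (l + of_nat m)"
      by (simp add: field_simps)
    moreover have "\<delta> * (real m + 1) \<le> Min F * (real m + 1)"
      by (rule mult_right_mono) (auto simp: \<delta>_def)
    ultimately show ?thesis by linarith
  next
    case False
    then have m: "real m \<ge> 2 * norm l" "real m \<ge> 1" unfolding M_def by linarith+
    have "\<delta> * (real m + 1) \<le> 1/4 * (real m + 1)"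
      by (rule mult_right_mono) (auto simp: \<delta>_def)
    also have "\<dots> \<le> real m - norm l"
    proof -
      have "1/4 * (real m + 1) = real m / 4 + 1/4" by simp
      then show ?thesis using m by linarith
    qed
    also have "\<dots> \<le> norm (l + of_nat m)"
      using norm_triangle_ineq2[of "of_nat m" "- l"] by (simp add: add.commute)
    finally show ?thesis .
  qed
  moreover have "\<delta> > 0" using \<open>Min F > 0\<close> by (simp add: \<delta>_def)
  ultimately show ?thesis by blast
qed

lemma norm_pochhammer_ge_fact:
  fixes l :: "'a::real_normed_field"
  assumes "\<And>m. l \<noteq> - of_nat m"
  shows "\<exists>\<delta>>0. \<forall>n. \<delta>^n * fact n \<le> norm (pochhammer l n)"
proof -
  obtain \<delta> where \<delta>: "\<delta> > 0" "\<And>m. \<delta> * (real m + 1) \<le> norm (l + of_nat m)"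
    using norm_add_of_nat_lower_bound[OF assms] by blast
  have "\<delta>^n * fact n \<le> norm (pochhammer l n)" for n
  proof (induction n)
    case (Suc n)
    have "\<delta>^Suc n * fact (Suc n) = (\<delta>^n * fact n) * (\<delta> * (real n + 1))"
      by (simp add: algebra_simps)
    also have "\<dots> \<le> norm (pochhammer l n) * norm (l + of_nat n)"
      using \<delta> by (intro mult_mono Suc.IH) auto
    also have "\<dots> = norm (pochhammer l (Suc n))"
      by (simp add: pochhammer_Suc norm_mult)
    finally show ?case .
  qed simp
  with \<delta>(1) show ?thesis by blast
qed

lemma norm_prod_pochhammer_le:
  fixes as :: "'a::real_normed_field list"
  shows "norm (\<Prod>a\<leftarrow>as. pochhammer a n) \<le> (\<Prod>a\<leftarrow>as. norm a + 1)^n * fact n ^ length as"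
proof (induction as)
  case (Cons a as)
  have "norm (\<Prod>a\<leftarrow>a # as. pochhammer a n) = norm (pochhammer a n) * norm (\<Prod>a\<leftarrow>as. pochhammer a n)"
    by (simp add: norm_mult)
  also have "\<dots> \<le> ((norm a + 1)^n * fact n) * ((\<Prod>a\<leftarrow>as. norm a + 1)^n * fact n ^ length as)"
    by (intro mult_mono norm_pochhammer_le_fact Cons.IH) auto
  also have "\<dots> = (\<Prod>a\<leftarrow>a # as. norm a + 1)^n * fact n ^ length (a # as)"
    by (simp add: power_mult_distrib mult_ac)
  finally show ?case .
qed simp

lemma norm_prod_pochhammer_ge:
  fixes bs :: "'a::real_normed_field list"
  assumes "\<And>b m. b \<in> set bs \<Longrightarrow> b \<noteq> - of_nat m"
  shows "\<exists>\<delta>>0. \<forall>n. \<delta>^n * fact n ^ length bs \<le> norm (\<Prod>b\<leftarrow>bs. pochhammer b n)"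
  using assms
proof (induction bs)
  case (Cons b bs)
  obtain \<delta> where \<delta>: "\<delta> > 0" "\<And>n. \<delta>^n * fact n \<le> norm (pochhammer b n)"
    using norm_pochhammer_ge_fact[of b] Cons.prems by auto
  obtain \<epsilon> where \<epsilon>: "\<epsilon> > 0" "\<And>n. \<epsilon>^n * fact n ^ length bs \<le> norm (\<Prod>b\<leftarrow>bs. pochhammer b n)"
    using Cons.IH Cons.prems by auto
  have "(\<delta> * \<epsilon>)^n * fact n ^ length (b # bs) \<le> norm (\<Prod>b\<leftarrow>b # bs. pochhammer b n)" for n
  proof -
    have "(\<delta> * \<epsilon>)^n * fact n ^ length (b # bs) = (\<delta>^n * fact n) * (\<epsilon>^n * fact n ^ length bs)"
      by (simp add: power_mult_distrib mult_ac)
    also have "\<dots> \<le> norm (pochhammer b n) * norm (\<Prod>b\<leftarrow>bs. pochhammer b n)"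
      using \<delta> \<epsilon> by (intro mult_mono) auto
    also have "\<dots> = norm (\<Prod>b\<leftarrow>b # bs. pochhammer b n)"
      by (simp add: norm_mult)
    finally show ?thesis .
  qed
  with \<delta>(1) \<epsilon>(1) show ?case
    by (intro exI[of _ "\<delta> * \<epsilon>"]) auto
qed (auto intro: exI[of _ 1])

lemma hyp_term_geometric_bound:
  assumes len: "length as \<le> Suc (length bs)" and bs: "\<And>b m. b \<in> set bs \<Longrightarrow> b \<noteq> - of_nat m"
  shows "\<exists>K>0. \<forall>n. norm (hyp_term as bs 1 n) \<le> K^n"
proof -
  define C where "C = (\<Prod>a\<leftarrow>as. norm a + 1)"
  have "C > 0"
    unfolding C_def by (induction as) (auto intro!: mult_pos_pos add_nonneg_pos)
  obtain \<delta> where \<delta>: "\<delta> > 0" "\<And>n. \<delta>^n * fact n ^ length bs \<le> norm (\<Prod>b\<leftarrow>bs. pochhammer b n)"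
    using norm_prod_pochhammer_ge[OF bs] by blast
  have "norm (hyp_term as bs 1 n) \<le> (C / \<delta>)^n" for n
  proof -
    have "fact n ^ length as \<le> (fact n ^ length bs * fact n :: real)"
      using power_increasing[OF len, of "fact n :: real"] by (simp add: mult.commute)
    then have ratio: "fact n ^ length as / (fact n ^ length bs * fact n) \<le> (1::real)"
      by simp
    have "norm (hyp_term as bs 1 n)
        = norm (\<Prod>a\<leftarrow>as. pochhammer a n) / (norm (\<Prod>b\<leftarrow>bs. pochhammer b n) * fact n)"
      by (simp add: hyp_term_def norm_divide norm_mult)
    also have "\<dots> \<le> (C^n * fact n ^ length as) / ((\<delta>^n * fact n ^ length bs) * fact n)"
      using norm_prod_pochhammer_le[where as = as and n = n] \<delta> less_imp_le[OF \<open>C > 0\<close>] unfolding C_def[symmetric]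
      by (intro frac_le mult_right_mono) auto
    also have "\<dots> = (C / \<delta>)^n * (fact n ^ length as / (fact n ^ length bs * fact n))"
      by (simp add: power_divide)
    also have "\<dots> \<le> (C / \<delta>)^n"
      using ratio \<open>C > 0\<close> \<delta>(1) by (intro mult_left_le) auto
    finally show ?thesis .
  qed
  with \<open>C > 0\<close> \<delta>(1) show ?thesis
    by (intro exI[of _ "C / \<delta>"]) auto
qed

lemma pochhammer_binomial_sums:
  fixes c y :: complex
  assumes "norm y < 1"
  shows "(\<lambda>n. pochhammer c n * y^n / fact n) sums (1 - y) powr (-c)"
proof -
  have "(\<lambda>n. ((-c) gchoose n) * (-y)^n) sums (1 + (-y)) powr (-c)"
    by (rule gen_binomial_complex) (use assms in simp)
  moreover have "((-c) gchoose n) * (-y)^n = pochhammer c n * y^n / fact n" for n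
  proof -
    have "((-c) gchoose n) * (-y)^n = ((-1)^n * (-1)^n) * (pochhammer c n * y^n / fact n)"
      by (simp add: gbinomial_pochhammer power_minus[of y] divide_inverse mult_ac)
    then show ?thesis by simp
  qed
  ultimately show ?thesis by simp
qed

lemma has_sum_diagonals:
  fixes G :: "nat \<times> nat \<Rightarrow> 'a::{comm_monoid_add,uniform_space,uniform_topological_group_add}"
  assumes "(G has_sum S) UNIV"
  shows "((\<lambda>N. \<Sum>m\<le>N. G (m, N - m)) has_sum S) UNIV"
proof (rule has_sum_Sigma')
  have "((\<lambda>(N, m). G (m, N - m)) has_sum S) (Sigma UNIV (\<lambda>N. {..N})) = (G has_sum S) UNIV"
    by (rule has_sum_reindex_bij_witness[where j = "\<lambda>(N, m). (m, N - m)" and i = "\<lambda>(m, l). (m + l, m)"])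
       auto
  with assms show "((\<lambda>(N, m). G (m, N - m)) has_sum S) (Sigma UNIV (\<lambda>N. {..N}))" by simp
qed (simp add: has_sum_finite)

lemma norm_binomial_double_term_le:
  fixes T :: "nat \<Rightarrow> complex" and \<alpha> \<beta> a x :: complex and K :: real
  assumes T: "norm (T m) \<le> K^m" and K: "0 \<le> K" and M: "norm a \<le> real M" "1 \<le> M"
  shows "norm (T m * (\<alpha> * x)^m * (pochhammer (a + of_nat (s*m)) i * (\<beta> * x)^i / fact i))
           \<le> 2^M * (2^s * K * norm (\<alpha> * x))^m * (2 * norm (\<beta> * x))^i"
proof -
  have "norm (a + of_nat (s*m)) \<le> real (M + s*m)"
    using norm_triangle_ineq[of a "of_nat (s*m)"] M(1) by (simp only: norm_of_nat of_nat_add)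
  then have "norm (pochhammer (a + of_nat (s*m)) i) / fact i \<le> 2^(M + s*m + i)"
    using norm_pochhammer_le_pow2_fact[of "a + of_nat (s*m)" "M + s*m" i] M(2)
    by (simp add: divide_le_eq)
  then have "norm (T m) * norm (\<alpha> * x)^m * (norm (pochhammer (a + of_nat (s*m)) i) / fact i)
               * norm (\<beta> * x)^i
             \<le> K^m * norm (\<alpha> * x)^m * 2^(M + s*m + i) * norm (\<beta> * x)^i"
    using K T by (intro mult_mono) auto
  also have "\<dots> = 2^M * (2^s * K * norm (\<alpha> * x))^m * (2 * norm (\<beta> * x))^i"
    by (simp add: power_add power_mult_distrib power_mult[symmetric] mult_ac)
  finally show ?thesis
    by (simp add: norm_mult norm_divide norm_power)
qed

lemma summable_on_geometric_product:
  fixes p q :: real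
  assumes p: "0 \<le> p" "p < 1" and q: "0 \<le> q" "q < 1"
  shows "(\<lambda>(m, i). p^m * q^i) summable_on UNIV"
proof -
  define H where "H = (\<lambda>(m::nat, i::nat). p^m * q^i)"
  have rows: "((\<lambda>i. H (m, i)) has_sum (p^m / (1 - q))) UNIV" for m
  proof -
    have "(\<lambda>i. p^m * q^i) sums (p^m * (1 / (1 - q)))"
      using q by (intro sums_mult geometric_sums) simp
    then have "(\<lambda>i. H (m, i)) sums (p^m / (1 - q))"
      by (simp add: H_def)
    then show ?thesis
      by (rule sums_nonneg_imp_has_sum) (use p q in \<open>simp add: H_def\<close>)
  qed
  have "(\<lambda>m. p^m / (1 - q)) summable_on UNIV"
  proof -
    have "(\<lambda>m. 1 / (1 - q) * p^m) sums (1 / (1 - q) * (1 / (1 - p)))"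
      using p by (intro sums_mult geometric_sums) simp
    then have "((\<lambda>m. 1 / (1 - q) * p^m) has_sum (1 / (1 - q) * (1 / (1 - p)))) UNIV"
      by (rule sums_nonneg_imp_has_sum) (use p q in simp)
    then show ?thesis by (simp add: has_sum_imp_summable)
  qed
  with rows have "H summable_on UNIV \<times> UNIV"
    using p q by (intro summable_on_SigmaI) (auto simp: H_def)
  then show ?thesis by (simp add: H_def)
qed

lemma binomial_double_series_rearrangement:
  fixes T :: "nat \<Rightarrow> complex" and \<alpha> \<beta> a x :: complex and K :: real
  assumes T: "\<And>m. norm (T m) \<le> K^m"
    and x\<beta>: "2 * norm (\<beta> * x) < 1" and x\<alpha>: "2^s * K * norm (\<alpha> * x) < 1"
  shows "\<exists>S. (\<lambda>m. T m * (\<alpha> * x)^m * (1 - \<beta> * x) powr (-a - of_nat (s*m))) sums S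
           \<and> (\<lambda>N. (\<Sum>m\<le>N. T m * \<alpha>^m * (pochhammer (a + of_nat (s*m)) (N - m) * \<beta>^(N - m) / fact (N - m)))
                  * x^N) sums S"
proof -
  define G where "G = (\<lambda>(m, i). T m * (\<alpha> * x)^m * (pochhammer (a + of_nat (s*m)) i * (\<beta> * x)^i / fact i))"
  define p where "p = 2^s * K * norm (\<alpha> * x)"
  define q where "q = 2 * norm (\<beta> * x)"
  define M where "M = nat \<lceil>norm a\<rceil> + 1"
  define H where "H = (\<lambda>mi. 2^M * (case mi of (m, i) \<Rightarrow> p^m * q^i))"
  have "0 \<le> K" using order_trans[OF norm_ge_zero T[of 1]] by simp
  then have p: "0 \<le> p" "p < 1" and q: "0 \<le> q" "q < 1"
    using x\<alpha> x\<beta> by (simp_all add: p_def q_def)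
  have "norm a \<le> real M" "1 \<le> M" unfolding M_def by linarith+
  have bound: "norm (G mi) \<le> H mi" for mi
  proof (cases mi)
    case (Pair m i)
    then show ?thesis
      using norm_binomial_double_term_le[where T = T and m = m and \<alpha> = \<alpha> and x = x and s = s and i = i
          and \<beta> = \<beta>, OF T \<open>0 \<le> K\<close> \<open>norm a \<le> real M\<close> \<open>1 \<le> M\<close>]
      by (simp add: G_def H_def p_def q_def mult.assoc)
  qed
  have "H summable_on UNIV"
    unfolding H_def by (rule summable_on_cmult_right[OF summable_on_geometric_product[OF p q]])
  then have "(\<lambda>mi. norm (G mi)) summable_on UNIV"
    by (rule Infinite_Sum.abs_summable_on_comparison_test') (rule bound)
  then have "G summable_on UNIV"
    using summable_on_iff_abs_summable_on_complex by blast
  then obtain S where GS: "(G has_sum S) UNIV"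
    by (auto simp: summable_on_def)
  have rows: "((\<lambda>i. G (m, i)) has_sum (T m * (\<alpha> * x)^m * (1 - \<beta> * x) powr (-a - of_nat (s*m)))) UNIV"
    for m
  proof (rule norm_summable_imp_has_sum)
    have "norm (\<beta> * x) < 1" using x\<beta> by simp
    from sums_mult[OF pochhammer_binomial_sums[OF this, of "a + of_nat (s*m)"], of "T m * (\<alpha> * x)^m"]
    show "(\<lambda>i. G (m, i)) sums (T m * (\<alpha> * x)^m * (1 - \<beta> * x) powr (-a - of_nat (s*m)))"
      by (simp add: G_def)
    have "summable (\<lambda>i. H (m, i))"
      using summable_mult[OF summable_geometric[of q], of "2^M * p^m"] q by (simp add: H_def mult.assoc)
    then show "summable (\<lambda>i. norm (G (m, i)))"
      by (rule summable_comparison_test'[where N = 0]) (simp add: bound)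
  qed
  have coefficient: "(\<Sum>m\<le>N. G (m, N - m))
      = (\<Sum>m\<le>N. T m * \<alpha>^m * (pochhammer (a + of_nat (s*m)) (N - m) * \<beta>^(N - m) / fact (N - m))) * x^N"
    for N
    unfolding sum_distrib_right
  proof (rule sum.cong[OF refl])
    fix m assume "m \<in> {..N}"
    then have "x^m * x^(N - m) = x^N" by (simp flip: power_add)
    then show "G (m, N - m)
        = T m * \<alpha>^m * (pochhammer (a + of_nat (s*m)) (N - m) * \<beta>^(N - m) / fact (N - m)) * x^N"
      unfolding G_def by (simp add: power_mult_distrib field_simps)
  qed
  from GS have "(G has_sum S) (UNIV \<times> UNIV)" by simp
  then have "((\<lambda>m. T m * (\<alpha> * x)^m * (1 - \<beta> * x) powr (-a - of_nat (s*m))) has_sum S) UNIV"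
    by (rule has_sum_Sigma'[OF _ rows])
  moreover have "((\<lambda>N. (\<Sum>m\<le>N. T m * \<alpha>^m * (pochhammer (a + of_nat (s*m)) (N - m) * \<beta>^(N - m)
      / fact (N - m))) * x^N) has_sum S) UNIV"
    using has_sum_diagonals[OF GS] by (simp only: coefficient)
  ultimately show ?thesis by (blast dest: has_sum_imp_sums)
qed

section \<open>The cubic transformation\<close>

lemma Q3_pochhammer_identity:
  fixes b :: complex
  assumes jk: "j \<le> k" and jN: "j \<le> N"
  shows "4^N * pochhammer (3/4 + of_nat k/2 + b/2 - of_nat N/2) (N - j)
           * pochhammer (3/4 + of_nat k/2 - b/2 - of_nat N/2) (N - j)
           * pochhammer (1/2 + b) k * pochhammer (1/2 - b) k
       = 4^k * pochhammer (1/2 - of_nat k - b) N * pochhammer (1/2 - of_nat k + b) N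
           * pochhammer ((1/4 - of_nat k/2 + b/2) - of_nat N/2 + of_nat j) (k - j)
           * pochhammer ((1/4 - of_nat k/2 - b/2) - of_nat N/2 + of_nat j) (k - j)"
proof -
  \<comment> \<open>With y = p - N/2 every symbol is, up to sign, one of those in pochhammer_duplication_identity.\<close>
  define y where "y = 1/4 - of_nat k/2 + b/2 - of_nat N/2"
  have B1: "3/4 + of_nat k/2 + b/2 - of_nat N/2 = y + of_nat k + 1/2"
    and b_plus: "1/2 + b = 2*y + of_nat N + of_nat k"
    and b_minus: "1/2 - of_nat k + b = 2*y + of_nat N"
    and p: "(1/4 - of_nat k/2 + b/2) - of_nat N/2 + of_nat j = y + of_nat j"
    by (simp_all add: y_def field_simps)
  have B2: "pochhammer (3/4 + of_nat k/2 - b/2 - of_nat N/2) (N - j)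
      = (-1)^(N - j) * pochhammer (y + of_nat j) (N - j)"
  proof -
    have "3/4 + of_nat k/2 - b/2 - of_nat N/2 = - (y + of_nat N - 1)" by (simp add: y_def field_simps)
    moreover have "y + of_nat N - 1 - of_nat (N - j) + 1 = y + of_nat j" using jN by (simp add: of_nat_diff)
    ultimately show ?thesis using pochhammer_minus[of "y + of_nat N - 1" "N - j"] by simp
  qed
  have minus_b: "pochhammer (1/2 - b) k = (-1)^k * pochhammer (2*y + of_nat N) k"
  proof -
    have "1/2 - b = - (2*y + of_nat N + of_nat k - 1)" by (simp add: y_def field_simps)
    then show ?thesis using pochhammer_minus[of "2*y + of_nat N + of_nat k - 1" k] by simp
  qed
  have minus_k_b: "pochhammer (1/2 - of_nat k - b) N = (-1)^N * pochhammer (2*y + 2 * of_nat k) N"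
  proof -
    have "1/2 - of_nat k - b = - (2*y + 2 * of_nat k + of_nat N - 1)" by (simp add: y_def field_simps)
    then have "pochhammer (1/2 - of_nat k - b) N
        = (-1)^N * pochhammer (2*y + 2 * of_nat k + of_nat N - 1 - of_nat N + 1) N"
      by (simp only: pochhammer_minus)
    then show ?thesis by simp
  qed
  have q: "pochhammer ((1/4 - of_nat k/2 - b/2) - of_nat N/2 + of_nat j) (k - j)
      = (-1)^(k - j) * pochhammer (y + of_nat N + 1/2) (k - j)"
  proof -
    have "(1/4 - of_nat k/2 - b/2) - of_nat N/2 + of_nat j = - (y + of_nat N + of_nat k - of_nat j - 1/2)"
      by (simp add: y_def field_simps)
    then have "pochhammer ((1/4 - of_nat k/2 - b/2) - of_nat N/2 + of_nat j) (k - j)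
        = (-1)^(k - j) * pochhammer (y + of_nat N + of_nat k - of_nat j - 1/2 - of_nat (k - j) + 1) (k - j)"
      by (simp only: pochhammer_minus)
    also have "y + of_nat N + of_nat k - of_nat j - 1/2 - of_nat (k - j) + 1 = y + of_nat N + 1/2"
      using jk by (simp add: of_nat_diff)
    finally show ?thesis .
  qed
  have split: "pochhammer (2*y + of_nat N) (2*k)
      = pochhammer (2*y + of_nat N) k * pochhammer (2*y + of_nat N + of_nat k) k"
    unfolding mult_2 by (rule pochhammer_product')
  have sign: "(-1::complex)^(N - j) * (-1)^k = (-1)^N * (-1)^(k - j)"
  proof -
    have "N - j + k = N + (k - j)" using jk jN by simp
    then show ?thesis by (metis power_add)
  qed
  have "4^N * pochhammer (3/4 + of_nat k/2 + b/2 - of_nat N/2) (N - j)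
           * pochhammer (3/4 + of_nat k/2 - b/2 - of_nat N/2) (N - j)
           * pochhammer (1/2 + b) k * pochhammer (1/2 - b) k
      = ((-1)^(N - j) * (-1)^k) * (4^N * pochhammer (y + of_nat k + 1/2) (N - j)
           * pochhammer (y + of_nat j) (N - j) * pochhammer (2*y + of_nat N) (2*k))"
    unfolding B1 B2 b_plus minus_b split by (simp only: mult_ac)
  also have "\<dots> = ((-1)^N * (-1)^(k - j)) * (4^k * pochhammer (2*y + 2 * of_nat k) N
           * pochhammer (2*y + of_nat N) N * pochhammer (y + of_nat j) (k - j)
           * pochhammer (y + of_nat N + 1/2) (k - j))"
    unfolding pochhammer_duplication_identity[OF jk jN] sign ..
  also have "\<dots> = 4^k * pochhammer (1/2 - of_nat k - b) N * pochhammer (1/2 - of_nat k + b) N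
           * pochhammer ((1/4 - of_nat k/2 + b/2) - of_nat N/2 + of_nat j) (k - j)
           * pochhammer ((1/4 - of_nat k/2 - b/2) - of_nat N/2 + of_nat j) (k - j)"
    unfolding minus_k_b b_minus p q by (simp only: mult_ac)
  finally show ?thesis .
qed

lemma cubic_coefficient_term:
  fixes a E F d :: complex
  assumes E: "\<And>i. E \<noteq> - of_nat i" and F: "\<And>i. F \<noteq> - of_nat i" and d: "\<And>i. d \<noteq> - of_nat i"
    and mN: "m \<le> N"
  shows "hyp_term [a/3, 1/3 + a/3, 2/3 + a/3, of_nat k + d] [E, F, d] 1 m * (-27)^m
           * (pochhammer (a + of_nat (3*m)) (N - m) * 4^(N - m) / fact (N - m))
       = pochhammer a N * 4^N / fact N
           * (pochhammer (- of_nat N) m * pochhammer (of_nat N / 2 + a / 2) m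
              * pochhammer (of_nat N / 2 + a / 2 + 1/2) m * pochhammer (d + of_nat k) m
              / (fact m * pochhammer E m * pochhammer F m * pochhammer d m))"
proof -
  note nz = pochhammer_nonzero[OF E] pochhammer_nonzero[OF F] pochhammer_nonzero[OF d]
  have "pochhammer a (3*m) * pochhammer (a + of_nat (3*m)) (N - m)
      = pochhammer a N * pochhammer (a + of_nat N) (2*m)"
    using pochhammer_product'[of a "3*m" "N - m"] pochhammer_product'[of a N "2*m"] mN
    by (simp add: add.commute)
  also have "pochhammer (a + of_nat N) (2*m)
      = 4^m * pochhammer (of_nat N / 2 + a / 2) m * pochhammer (of_nat N / 2 + a / 2 + 1/2) m"
  proof -
    have "2 * (of_nat N / 2 + a / 2) = a + of_nat N" by simp
    then show ?thesis using pochhammer_double'[where z = "of_nat N / 2 + a / 2" and n = m]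
      by (simp add: ac_simps)
  qed
  finally have a3m: "27^m * pochhammer (a/3) m * pochhammer (1/3 + a/3) m * pochhammer (2/3 + a/3) m
      * pochhammer (a + of_nat (3*m)) (N - m) = pochhammer a N * (4^m
        * pochhammer (of_nat N / 2 + a / 2) m * pochhammer (of_nat N / 2 + a / 2 + 1/2) m)"
    unfolding pochhammer_triplication .
  have hyp: "hyp_term [a/3, 1/3 + a/3, 2/3 + a/3, of_nat k + d] [E, F, d] 1 m
      = pochhammer (a/3) m * pochhammer (1/3 + a/3) m * pochhammer (2/3 + a/3) m * pochhammer (of_nat k + d) m
        / (pochhammer E m * pochhammer F m * pochhammer d m) / fact m"
    by (simp add: hyp_term_def mult.assoc)
  have regroup: "p1 * p2 * p3 * p4 / (q1 * q2 * q3) / f * (s * t) * (p * c / g)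
      = (t * p1 * p2 * p3 * p) * (s * c * p4 / (q1 * q2 * q3 * f * g))"
    for p1 p2 p3 p4 q1 q2 q3 f s t p c g :: complex
    by (simp add: divide_inverse mult_ac)
  have h27: "(-27::complex)^m = (-1)^m * 27^m" by (simp flip: power_mult_distrib)
  have h4: "(4::complex)^N = 4^m * 4^(N - m)" using mN by (simp flip: power_add)
  have "hyp_term [a/3, 1/3 + a/3, 2/3 + a/3, of_nat k + d] [E, F, d] 1 m * (-27)^m
           * (pochhammer (a + of_nat (3*m)) (N - m) * 4^(N - m) / fact (N - m))
      = (27^m * pochhammer (a/3) m * pochhammer (1/3 + a/3) m * pochhammer (2/3 + a/3) m
           * pochhammer (a + of_nat (3*m)) (N - m))
        * ((-1)^m * 4^(N - m) * pochhammer (d + of_nat k) m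
           / (pochhammer E m * pochhammer F m * pochhammer d m * fact m * fact (N - m)))"
    unfolding hyp h27 unfolding add.commute[of "of_nat k" d] by (rule regroup)
  also note a3m
  also have "pochhammer a N * (4^m * pochhammer (of_nat N / 2 + a / 2) m
        * pochhammer (of_nat N / 2 + a / 2 + 1/2) m)
        * ((-1)^m * 4^(N - m) * pochhammer (d + of_nat k) m
           / (pochhammer E m * pochhammer F m * pochhammer d m * fact m * fact (N - m)))
      = pochhammer a N * 4^N / fact N
           * (pochhammer (- of_nat N) m * pochhammer (of_nat N / 2 + a / 2) m
              * pochhammer (of_nat N / 2 + a / 2 + 1/2) m * pochhammer (d + of_nat k) m
              / (fact m * pochhammer E m * pochhammer F m * pochhammer d m))"
    unfolding pochhammer_minus_of_nat[OF mN] h4 using nz by (simp add: field_simps)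
  finally show ?thesis .
qed

lemma Q3_terminating_sum:
  fixes a b d :: complex and k N :: nat
  defines "\<alpha> \<equiv> of_nat N / 2 + a / 2"
  assumes nz: "pochhammer (1/2 + b) k * pochhammer (1/2 - b) k \<noteq> 0"
  shows "4^N * (\<Sum>j\<le>N. pochhammer (d - (\<alpha> + 1/2)) j * pochhammer (- of_nat k) j * pochhammer (- of_nat N) j
            * pochhammer \<alpha> j / (fact j * pochhammer d j)
            * pochhammer (3/4 + of_nat k/2 + b/2 - of_nat N/2) (N - j)
            * pochhammer (3/4 + of_nat k/2 - b/2 - of_nat N/2) (N - j))
       = pochhammer (1/2 - of_nat k - b) N * pochhammer (1/2 - of_nat k + b) N * Q3 k N a b d"
proof -
  define P where "P = pochhammer (1/2 + b) k * pochhammer (1/2 - b) k"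
  define c where "c = pochhammer (1/2 - of_nat k - b) N * pochhammer (1/2 - of_nat k + b) N"
  define X where "X j = pochhammer (- of_nat N) j * pochhammer \<alpha> j * pochhammer (- of_nat k) j
      * pochhammer (- of_nat N / 2 - a / 2 - 1/2 + d) j / (fact j * pochhammer d j)" for j
  define Y where "Y j = pochhammer ((1/4 - of_nat k/2 + b/2) - of_nat N/2 + of_nat j) (k - j)
      * pochhammer ((1/4 - of_nat k/2 - b/2) - of_nat N/2 + of_nat j) (k - j)" for j
  define Z where "Z j = 4^N * pochhammer (3/4 + of_nat k/2 + b/2 - of_nat N/2) (N - j)
      * pochhammer (3/4 + of_nat k/2 - b/2 - of_nat N/2) (N - j)" for j
  have X0: "X j = 0" if "\<not> (j \<le> N \<and> j \<le> k)" for j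
    using that by (auto simp: X_def pochhammer_of_nat_eq_0_iff)
  have ZY: "X j * Z j = X j * (c * 4^k / P * Y j)" for j
  proof (cases "j \<le> N \<and> j \<le> k")
    case True
    then have "Z j * P = c * 4^k * Y j"
      using Q3_pochhammer_identity[of j k N b] by (simp add: Z_def Y_def P_def c_def mult_ac)
    then show ?thesis using nz by (simp add: P_def field_simps)
  qed (simp add: X0)
  have shift: "d - (\<alpha> + 1/2) = - of_nat N / 2 - a / 2 - 1/2 + d" by (simp add: \<alpha>_def)
  have "4^N * (\<Sum>j\<le>N. pochhammer (d - (\<alpha> + 1/2)) j * pochhammer (- of_nat k) j * pochhammer (- of_nat N) j
            * pochhammer \<alpha> j / (fact j * pochhammer d j)
            * pochhammer (3/4 + of_nat k/2 + b/2 - of_nat N/2) (N - j)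
            * pochhammer (3/4 + of_nat k/2 - b/2 - of_nat N/2) (N - j))
      = (\<Sum>j\<le>N. X j * Z j)"
    unfolding shift by (simp add: sum_distrib_left X_def Z_def mult_ac)
  also have "\<dots> = (\<Sum>j\<le>N + k. X j * Z j)"
    by (rule sum.mono_neutral_left) (auto simp: X0)
  also have "\<dots> = (\<Sum>j=0..k. X j * (c * 4^k / P * Y j))"
    unfolding ZY by (rule sum.mono_neutral_right) (auto simp: X0)
  also have "\<dots> = c * (4^k / P * (\<Sum>j=0..k. X j * Y j))"
    by (simp add: sum_distrib_left mult_ac)
  also have "4^k / P * (\<Sum>j=0..k. X j * Y j) = Q3 k N a b d"
    by (simp add: Q3_def Let_def P_def X_def Y_def \<alpha>_def mult_ac)
  finally show ?thesis by (simp add: c_def)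
qed

lemma cubic_coefficient_identity:
  fixes a b d :: complex and k N :: nat
  defines "B1 \<equiv> 3/4 + of_nat k / 2 + a/2 + b/2" and "B2 \<equiv> 3/4 + of_nat k / 2 + a/2 - b/2"
  assumes B1: "\<And>m. B1 \<noteq> - of_nat m" and B2: "\<And>m. B2 \<noteq> - of_nat m" and d: "\<And>m. d \<noteq> - of_nat m"
    and nz: "pochhammer (1/2 + b) k * pochhammer (1/2 - b) k \<noteq> 0"
  shows "(\<Sum>m\<le>N. hyp_term [a/3, 1/3 + a/3, 2/3 + a/3, of_nat k + d] [B1, B2, d] 1 m * (-27)^m
            * (pochhammer (a + of_nat (3*m)) (N - m) * 4^(N - m) / fact (N - m)))
       = pochhammer a N * pochhammer (1/2 - of_nat k - b) N * pochhammer (1/2 - of_nat k + b) N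
           / (fact N * pochhammer B1 N * pochhammer B2 N) * Q3 k N a b d"
proof -
  have balanced: "B1 + B2 = 1 + (of_nat N / 2 + a / 2) + (of_nat N / 2 + a / 2 + 1/2) + of_nat k - of_nat N"
    by (simp add: B1_def B2_def field_simps)
  have B1_shift: "B1 - (of_nat N / 2 + a / 2) = 3/4 + of_nat k/2 + b/2 - of_nat N/2"
    and B2_shift: "B2 - (of_nat N / 2 + a / 2) = 3/4 + of_nat k/2 - b/2 - of_nat N/2"
    by (simp_all add: B1_def B2_def field_simps)
  have transformation:
    "(\<Sum>m\<le>N. pochhammer (- of_nat N) m * pochhammer (of_nat N / 2 + a / 2) m
          * pochhammer (of_nat N / 2 + a / 2 + 1/2) m * pochhammer (d + of_nat k) m
          / (fact m * pochhammer B1 m * pochhammer B2 m * pochhammer d m))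
      = (\<Sum>j\<le>N. pochhammer (d - (of_nat N / 2 + a / 2 + 1/2)) j * pochhammer (- of_nat k) j
            * pochhammer (- of_nat N) j * pochhammer (of_nat N / 2 + a / 2) j / (fact j * pochhammer d j)
            * pochhammer (3/4 + of_nat k/2 + b/2 - of_nat N/2) (N - j)
            * pochhammer (3/4 + of_nat k/2 - b/2 - of_nat N/2) (N - j))
        / (pochhammer B1 N * pochhammer B2 N)"
    using terminating_4F3_transformation[OF B1 B2 d balanced] unfolding B1_shift B2_shift .
  have reorder: "x * y / z * (s / (p * q)) = x / (z * p * q) * (y * s)"
    and regroup: "x / z * (u * v * w) = x * u * v / z * w" for x y z s p q u v w :: complex
    by (simp_all add: divide_inverse mult_ac)
  have "(\<Sum>m\<le>N. hyp_term [a/3, 1/3 + a/3, 2/3 + a/3, of_nat k + d] [B1, B2, d] 1 m * (-27)^m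
            * (pochhammer (a + of_nat (3*m)) (N - m) * 4^(N - m) / fact (N - m)))
      = pochhammer a N * 4^N / fact N * (\<Sum>m\<le>N. pochhammer (- of_nat N) m * pochhammer (of_nat N / 2 + a / 2) m
          * pochhammer (of_nat N / 2 + a / 2 + 1/2) m * pochhammer (d + of_nat k) m
          / (fact m * pochhammer B1 m * pochhammer B2 m * pochhammer d m))"
    unfolding sum_distrib_left
    by (rule sum.cong[OF refl], rule cubic_coefficient_term[OF B1 B2 d]) simp
  also have "\<dots> = pochhammer a N / (fact N * pochhammer B1 N * pochhammer B2 N)
      * (4^N * (\<Sum>j\<le>N. pochhammer (d - (of_nat N / 2 + a / 2 + 1/2)) j * pochhammer (- of_nat k) j
            * pochhammer (- of_nat N) j * pochhammer (of_nat N / 2 + a / 2) j / (fact j * pochhammer d j)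
            * pochhammer (3/4 + of_nat k/2 + b/2 - of_nat N/2) (N - j)
            * pochhammer (3/4 + of_nat k/2 - b/2 - of_nat N/2) (N - j)))"
    unfolding transformation by (rule reorder)
  also have "4^N * (\<Sum>j\<le>N. pochhammer (d - (of_nat N / 2 + a / 2 + 1/2)) j * pochhammer (- of_nat k) j
            * pochhammer (- of_nat N) j * pochhammer (of_nat N / 2 + a / 2) j / (fact j * pochhammer d j)
            * pochhammer (3/4 + of_nat k/2 + b/2 - of_nat N/2) (N - j)
            * pochhammer (3/4 + of_nat k/2 - b/2 - of_nat N/2) (N - j))
      = pochhammer (1/2 - of_nat k - b) N * pochhammer (1/2 - of_nat k + b) N * Q3 k N a b d"
    by (rule Q3_terminating_sum[OF nz])
  finally show ?thesis by (simp only: regroup)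
qed

lemma hyp_term_eq_power:
  "hyp_term as bs z n = hyp_term as bs 1 n * z^n"
  by (simp add: hyp_term_def)

lemma cubic_transformation_pointwise:
  fixes k :: nat and a b d x :: complex and K :: real
  defines "B1 \<equiv> 3/4 + of_nat k / 2 + a/2 + b/2" and "B2 \<equiv> 3/4 + of_nat k / 2 + a/2 - b/2"
  defines "ups \<equiv> [a/3, 1/3 + a/3, 2/3 + a/3, of_nat k + d]" and "lows \<equiv> [B1, B2, d]"
  defines "c \<equiv> \<lambda>n. pochhammer a n * pochhammer (1/2 - of_nat k - b) n * pochhammer (1/2 - of_nat k + b) n
                 / (fact n * pochhammer B1 n * pochhammer B2 n) * Q3 k n a b d * x ^ n"
  assumes B1: "\<And>m. B1 \<noteq> - of_nat m" and B2: "\<And>m. B2 \<noteq> - of_nat m" and d: "\<And>m. d \<noteq> - of_nat m"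
    and nz: "pochhammer (1/2 + b) k * pochhammer (1/2 - b) k \<noteq> 0"
    and K: "\<And>m. norm (hyp_term ups lows 1 m) \<le> K^m"
    and x: "norm x < 1/8" "216 * K * norm x < 1"
  shows "summable (hyp_term ups lows (- 27 * x / (1 - 4*x) ^ 3)) \<and> summable c \<and>
         hypergeom ups lows (- 27 * x / (1 - 4*x) ^ 3) = (1 - 4*x) powr a * (\<Sum>n. c n)"
proof -
  define w where "w = 1 - 4*x"
  have "w \<noteq> 0"
  proof
    assume "w = 0"
    then have "norm (4 * x) = 1" by (simp add: w_def)
    with x(1) show False by (simp add: norm_mult)
  qed
  have "2 * norm (4 * x) < 1" "2^3 * K * norm (-27 * x) < 1"
    using x by (simp_all add: norm_mult algebra_simps)
  then obtain S
    where hyp_S: "(\<lambda>m. hyp_term ups lows 1 m * (-27 * x)^m * (1 - 4 * x) powr (-a - of_nat (3*m))) sums S"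
      and coeff_S: "(\<lambda>N. (\<Sum>m\<le>N. hyp_term ups lows 1 m * (-27)^m
             * (pochhammer (a + of_nat (3*m)) (N - m) * 4^(N - m) / fact (N - m))) * x^N) sums S"
    using binomial_double_series_rearrangement[where T = "hyp_term ups lows 1" and \<beta> = 4 and \<alpha> = "-27"
        and s = 3, OF K] by blast
  have c_S: "c sums S"
    using coeff_S unfolding c_def ups_def lows_def B1_def B2_def
      cubic_coefficient_identity[OF B1[unfolded B1_def] B2[unfolded B2_def] d nz] .
  have "hyp_term ups lows (- 27 * x / w^3) m * w powr (-a)
      = hyp_term ups lows 1 m * (-27 * x)^m * w powr (-a - of_nat (3*m))" for m
  proof -
    have wpow: "w powr (-a - of_nat (3*m)) = w powr (-a) / w^(3*m)"
      using powr_nat'[of w "3*m"] \<open>w \<noteq> 0\<close> by (simp add: powr_diff)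
    have zpow: "(- 27 * x / w^3)^m = (- 27 * x)^m / w^(3*m)"
      unfolding power_mult by (rule power_divide)
    show ?thesis
      unfolding hyp_term_eq_power[of _ _ "- 27 * x / w^3"] zpow wpow by (simp add: divide_inverse mult_ac)
  qed
  with hyp_S have "(\<lambda>m. hyp_term ups lows (- 27 * x / w^3) m * w powr (-a) / w powr (-a))
      sums (S / w powr (-a))"
    by (intro sums_divide) (simp add: w_def)
  moreover have "w powr (-a) \<noteq> 0" using \<open>w \<noteq> 0\<close> by simp
  ultimately have "hyp_term ups lows (- 27 * x / w^3) sums (S / w powr (-a))"
    by simp
  moreover have "S / w powr (-a) = w powr a * S"
    by (simp add: powr_minus divide_inverse mult.commute)
  ultimately have "hyp_term ups lows (- 27 * x / w^3) sums (w powr a * S)"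
    by simp
  with c_S show ?thesis
    by (auto simp: w_def hypergeom_def sums_iff)
qed

theorem theorem5:
  fixes k :: nat and a b d :: complex
  assumes gen1: "\<And>m::nat. 3/4 + of_nat k / 2 + a/2 + b/2 \<noteq> - of_nat m"
      and gen2: "\<And>m::nat. 3/4 + of_nat k / 2 + a/2 - b/2 \<noteq> - of_nat m"
      and gen3: "\<And>m::nat. d \<noteq> - of_nat m"
      and gen4: "pochhammer (1/2 + b) k \<noteq> 0"
      and gen5: "pochhammer (1/2 - b) k \<noteq> 0"
  shows "\<exists>r>0. \<forall>x::complex. norm x < r \<longrightarrow>
    (let B1 = 3/4 + of_nat k / 2 + a/2 + b/2; B2 = 3/4 + of_nat k / 2 + a/2 - b/2;
         ups = [a/3, 1/3 + a/3, 2/3 + a/3, of_nat k + d]; lows = [B1, B2, d];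
         z = - 27 * x / (1 - 4*x) ^ 3;
         c = (\<lambda>n. pochhammer a n * pochhammer (1/2 - of_nat k - b) n * pochhammer (1/2 - of_nat k + b) n
                 / (fact n * pochhammer B1 n * pochhammer B2 n) * Q3 k n a b d * x ^ n)
     in summable (hyp_term ups lows z) \<and> summable c \<and>
        hypergeom ups lows z = (1 - 4*x) powr a * (\<Sum>n. c n))"
proof -
  have "\<exists>K>0. \<forall>m. norm (hyp_term [a/3, 1/3 + a/3, 2/3 + a/3, of_nat k + d]
      [3/4 + of_nat k / 2 + a/2 + b/2, 3/4 + of_nat k / 2 + a/2 - b/2, d] 1 m) \<le> K^m"
  proof (rule hyp_term_geometric_bound)
    fix \<beta> m
    assume "\<beta> \<in> set [3/4 + of_nat k / 2 + a/2 + b/2, 3/4 + of_nat k / 2 + a/2 - b/2, d]"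
    then show "\<beta> \<noteq> - of_nat m" using gen1[of m] gen2[of m] gen3[of m] by auto
  qed simp
  then obtain K where "K > 0" and K: "\<And>m. norm (hyp_term [a/3, 1/3 + a/3, 2/3 + a/3, of_nat k + d]
      [3/4 + of_nat k / 2 + a/2 + b/2, 3/4 + of_nat k / 2 + a/2 - b/2, d] 1 m) \<le> K^m"
    by blast
  define r where "r = min (1/8) (1 / (216 * K))"
  have "r > 0" using \<open>K > 0\<close> by (simp add: r_def)
  have small: "norm x < 1/8" "216 * K * norm x < 1" if "norm x < r" for x :: complex
    using that \<open>K > 0\<close> by (simp_all add: r_def field_simps)
  have nz: "pochhammer (1/2 + b) k * pochhammer (1/2 - b) k \<noteq> 0"
    using gen4 gen5 by simp
  show ?thesis
    unfolding Let_def
    by (intro cubic_transformation_pointwise[OF gen1 gen2 gen3 nz K] exI[of _ r] conjI allI impI)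
       (use \<open>r > 0\<close> small in blast)+
qed

end
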